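(* Let $k\ge2$ and $G=\mathrm{BS}(1,k)=\langle a,t\mid tat^{-1}=a^k\rangle$. For every finite subset $A\subseteq G$ there exists $g\in G$ such that $c(gA)=|A|$, i.e. the elements of $gA$ lie in pairwise distinct conjugacy classes.
   Context: For $B\subseteq G$, $c(B)$ is the number of distinct conjugacy classes of $G$ meeting $B$. *)

theory Defs
  imports Complex_Main "HOL-Algebra.Group"
begin

text \<open>Concrete model of BS(1,k) = < a, t | t a t^-1 = a^k > as the affine group
  {z \<mapsto> k^n z + x : x \<in> Z[1/k], n \<in> Z}; the pair (x,n) is the map z \<mapsto> k^n z + x.\<close>

definition BS :: "int \<Rightarrow> (rat \<times> int) monoid" where
  "BS k = \<lparr> carrier = {(x, n). \<exists>m::nat. x * of_int k ^ m \<in> \<int>},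
            mult = (\<lambda>(x, n) (y, m). (x + of_int k powi n * y, n + m)),
            one = (0, 0) \<rparr>"

definition BS_a :: "rat \<times> int" where "BS_a = (1, 0)"
definition BS_t :: "rat \<times> int" where "BS_t = (0, 1)"

definition conj_class :: "('a, 'b) monoid_scheme \<Rightarrow> 'a \<Rightarrow> 'a set" where
  "conj_class G x = {g \<otimes>\<^bsub>G\<^esub> x \<otimes>\<^bsub>G\<^esub> inv\<^bsub>G\<^esub> g | g. g \<in> carrier G}"

definition num_conj_classes :: "('a, 'b) monoid_scheme \<Rightarrow> 'a set \<Rightarrow> nat" where
  "num_conj_classes G B = card (conj_class G ` B)"

end

theory Submission
  imports Defs
begin

text \<open>Two elements (x, n) and (x', n') of BS(1,k) are conjugate iff n' = n and
  x' = k^m x + w (1 - k^n) for some m and some w in Z[1/k], i.e. iff x' is congruent to k^m x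
  modulo k^n - 1 in Z[1/k]. Translating A by a suitable g clears the denominators and makes
  every exponent n large: the elements become (k^r u, n) with integers u in a window [a, 2a).
  As k^n - 1 is coprime to k, a conjugacy then gives an integer congruence
  k^j u = u' (mod k^n - 1) with 0 \<le> j < n, and the window together with the size of k^n - 1
  forces j = 0 and u = u'.\<close>

definition Ints_loc :: "int \<Rightarrow> rat set" where
  "Ints_loc k = {x. \<exists>e::nat. x * of_int k ^ e \<in> \<int>}"

lemma Ints_mult_power_mono:
  assumes "x * of_int k ^ e \<in> \<int>" "e \<le> e'"
  shows "x * (of_int k :: rat) ^ e' \<in> \<int>"
proof -
  have "x * (of_int k :: rat) ^ e' = (x * of_int k ^ e) * of_int (k ^ (e' - e))"
    using assms(2) by (simp add: power_add[symmetric])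
  then show ?thesis
    using assms(1) by (metis Ints_mult Ints_of_int)
qed

lemma Ints_loc_common_denominator:
  assumes "finite X" "X \<subseteq> Ints_loc k"
  shows "\<exists>E. \<forall>x\<in>X. x * of_int k ^ E \<in> \<int>"
  using assms
proof (induction X rule: finite_induct)
  case empty
  then show ?case by simp
next
  case (insert x X)
  then obtain E e where "\<forall>y\<in>X. y * of_int k ^ E \<in> \<int>" "x * of_int k ^ e \<in> \<int>"
    unfolding Ints_loc_def by blast
  then have "\<forall>y\<in>insert x X. y * of_int k ^ (E + e) \<in> \<int>"
    using Ints_mult_power_mono by (metis insert_iff le_add1 le_add2)
  then show ?case by blast
qed

lemma Ints_loc_of_int [simp]: "of_int z \<in> Ints_loc k"
  unfolding Ints_loc_def by (rule CollectI exI[of _ 0])+ simp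

lemma zero_in_Ints_loc [simp]: "0 \<in> Ints_loc k"
  using Ints_loc_of_int[of 0] by simp

lemma Ints_loc_add:
  assumes "x \<in> Ints_loc k" "y \<in> Ints_loc k"
  shows "x + y \<in> Ints_loc k"
proof -
  obtain E where "x * of_int k ^ E \<in> \<int>" "y * of_int k ^ E \<in> \<int>"
    using Ints_loc_common_denominator[of "{x, y}" k] assms by auto
  then have "(x + y) * of_int k ^ E \<in> \<int>"
    by (simp add: distrib_right)
  then show ?thesis
    unfolding Ints_loc_def by blast
qed

lemma Ints_loc_mult:
  assumes "x \<in> Ints_loc k" "y \<in> Ints_loc k"
  shows "x * y \<in> Ints_loc k"
proof -
  obtain d e where "x * of_int k ^ d \<in> \<int>" "y * of_int k ^ e \<in> \<int>"
    using assms unfolding Ints_loc_def by blast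
  moreover have "(x * y) * of_int k ^ (d + e) = (x * of_int k ^ d) * (y * of_int k ^ e)"
    by (simp add: power_add algebra_simps)
  ultimately have "(x * y) * of_int k ^ (d + e) \<in> \<int>"
    by (metis Ints_mult)
  then show ?thesis
    unfolding Ints_loc_def by blast
qed

lemma Ints_loc_uminus:
  assumes "x \<in> Ints_loc k"
  shows "- x \<in> Ints_loc k"
  using Ints_loc_mult[OF Ints_loc_of_int[of "-1"] assms] by simp

lemma Ints_loc_diff:
  assumes "x \<in> Ints_loc k" "y \<in> Ints_loc k"
  shows "x - y \<in> Ints_loc k"
  using Ints_loc_add[OF assms(1) Ints_loc_uminus[OF assms(2)]] by simp

lemma Ints_loc_divide_power:
  assumes "x \<in> Ints_loc k" "k \<noteq> 0"
  shows "x / of_int k ^ n \<in> Ints_loc k"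
proof -
  obtain e where "x * of_int k ^ e \<in> \<int>"
    using assms(1) unfolding Ints_loc_def by blast
  moreover have "(x / of_int k ^ n) * of_int k ^ (e + n) = x * of_int k ^ e"
    using assms(2) by (simp add: power_add)
  ultimately show ?thesis
    unfolding Ints_loc_def by (metis (mono_tags) CollectI)
qed

lemma Ints_loc_power_int:
  assumes "k \<noteq> 0"
  shows "(of_int k :: rat) powi m \<in> Ints_loc k"
proof (cases "m \<ge> 0")
  case True
  then obtain n where "m = int n"
    by (metis nonneg_eq_int)
  then show ?thesis
    using Ints_loc_of_int[of "k ^ n" k] by simp
next
  case False
  then obtain n where "m = - int n"
    by (metis nonpos_int_cases not_le order.strict_implies_order)
  then have "(of_int k :: rat) powi m = 1 / of_int k ^ n"
    by (simp add: power_int_minus divide_inverse)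
  then show ?thesis
    using Ints_loc_divide_power[OF Ints_loc_of_int[of 1] assms, of n] by simp
qed

lemma Ints_loc_power_subset: "Ints_loc (k ^ s) \<subseteq> Ints_loc k"
  unfolding Ints_loc_def by (auto simp: power_mult[symmetric])

lemma dvd_of_Ints_loc:
  fixes k M n :: int
  assumes "coprime M k" "of_int n = of_int M * r" "r \<in> Ints_loc k"
  shows "M dvd n"
proof -
  obtain e where "r * of_int k ^ e \<in> \<int>"
    using assms(3) unfolding Ints_loc_def by blast
  then obtain z where "r * of_int k ^ e = of_int z"
    by (elim Ints_cases)
  then have "(of_int (n * k ^ e) :: rat) = of_int (M * z)"
    using assms(2) by (simp add: mult.assoc)
  then have "M dvd n * k ^ e"
    by (simp only: of_int_eq_iff) simp
  moreover have "coprime M (k ^ e)"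
    using assms(1) by simp
  ultimately show ?thesis
    using coprime_dvd_mult_left_iff by blast
qed

lemma carrier_BS: "carrier (BS k) = Ints_loc k \<times> UNIV"
  by (auto simp: BS_def Ints_loc_def)

lemma mult_BS: "(x, n) \<otimes>\<^bsub>BS k\<^esub> (y, m) = (x + of_int k powi n * y, n + m)"
  by (simp add: BS_def)

lemma one_BS: "\<one>\<^bsub>BS k\<^esub> = (0, 0)"
  by (simp add: BS_def)

lemma group_BS:
  assumes "k \<noteq> 0"
  shows "group (BS k)"
proof (rule groupI)
  fix p q
  assume "p \<in> carrier (BS k)" "q \<in> carrier (BS k)"
  then show "p \<otimes>\<^bsub>BS k\<^esub> q \<in> carrier (BS k)"
    using assms by (cases p, cases q)
      (auto simp: mult_BS carrier_BS intro!: Ints_loc_add Ints_loc_mult Ints_loc_power_int)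
next
  show "\<one>\<^bsub>BS k\<^esub> \<in> carrier (BS k)"
    by (simp add: one_BS carrier_BS)
next
  fix p q r
  show "p \<otimes>\<^bsub>BS k\<^esub> q \<otimes>\<^bsub>BS k\<^esub> r = p \<otimes>\<^bsub>BS k\<^esub> (q \<otimes>\<^bsub>BS k\<^esub> r)"
    using assms by (cases p, cases q, cases r) (simp add: mult_BS power_int_add algebra_simps)
next
  fix p
  show "\<one>\<^bsub>BS k\<^esub> \<otimes>\<^bsub>BS k\<^esub> p = p"
    by (cases p) (simp add: one_BS mult_BS)
next
  fix p
  assume "p \<in> carrier (BS k)"
  then obtain x n where p: "p = (x, n)" "x \<in> Ints_loc k"
    by (auto simp: carrier_BS)
  let ?q = "(- (of_int k powi (- n) * x), - n)"
  have "?q \<in> carrier (BS k)"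
    using p assms by (auto simp: carrier_BS intro!: Ints_loc_mult Ints_loc_uminus Ints_loc_power_int)
  moreover have "?q \<otimes>\<^bsub>BS k\<^esub> p = \<one>\<^bsub>BS k\<^esub>"
    using p by (simp add: mult_BS one_BS)
  ultimately show "\<exists>q\<in>carrier (BS k). q \<otimes>\<^bsub>BS k\<^esub> p = \<one>\<^bsub>BS k\<^esub>"
    by blast
qed

lemma inv_BS:
  assumes "k \<noteq> 0" "x \<in> Ints_loc k"
  shows "inv\<^bsub>BS k\<^esub> (x, n) = (- (of_int k powi (- n) * x), - n)"
proof (rule group.inv_equality[OF group_BS[OF assms(1)]])
  show "(- (of_int k powi (- n) * x), - n) \<otimes>\<^bsub>BS k\<^esub> (x, n) = \<one>\<^bsub>BS k\<^esub>"
    by (simp add: mult_BS one_BS)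
  show "(x, n) \<in> carrier (BS k)" "(- (of_int k powi (- n) * x), - n) \<in> carrier (BS k)"
    using assms by (auto simp: carrier_BS intro!: Ints_loc_mult Ints_loc_uminus Ints_loc_power_int)
qed

lemma conj_class_BS:
  assumes "k \<noteq> 0"
  shows "conj_class (BS k) (x, n) =
    {(of_int k powi m * x + w * (1 - of_int k powi n), n) | w m. w \<in> Ints_loc k}"
proof -
  have conj: "(w, m) \<otimes>\<^bsub>BS k\<^esub> (x, n) \<otimes>\<^bsub>BS k\<^esub> inv\<^bsub>BS k\<^esub> (w, m) =
      (of_int k powi m * x + w * (1 - of_int k powi n), n)" if "w \<in> Ints_loc k" for w m
    using that assms by (simp add: inv_BS mult_BS power_int_add power_int_minus algebra_simps)
  then show ?thesis
    unfolding conj_class_def carrier_BS by (auto simp: conj) (blast, metis conj)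
qed

lemma power_int_sub_one_factor:
  assumes "k \<noteq> 0"
  shows "\<exists>c\<in>Ints_loc k. (of_int k :: rat) powi q - 1 = (of_int k - 1) * c"
proof -
  define S where "S n = (\<Sum>i<n. k ^ i)" for n
  have geom: "(of_int k :: rat) ^ n - 1 = (of_int k - 1) * of_int (S n)" for n
    unfolding S_def by (simp add: power_diff_1_eq)
  show ?thesis
  proof (cases "q \<ge> 0")
    case True
    then obtain n where "q = int n"
      by (metis nonneg_eq_int)
    then show ?thesis
      using geom[of n] Ints_loc_of_int by auto
  next
    case False
    then obtain n where "q = - int n"
      by (metis nonpos_int_cases not_le order.strict_implies_order)
    then have "(of_int k :: rat) powi q - 1 = - (of_int k ^ n - 1) / of_int k ^ n"
      using assms by (simp add: power_int_minus field_simps)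
    also have "\<dots> = (of_int k - 1) * (- of_int (S n) / of_int k ^ n)"
      by (simp add: geom)
    finally show ?thesis
      using Ints_loc_divide_power[OF Ints_loc_uminus[OF Ints_loc_of_int] assms] by blast
  qed
qed

lemma power_int_mod_cong:
  fixes k m :: int and s :: nat
  assumes "k \<noteq> 0" "0 < s"
  shows "\<exists>c\<in>Ints_loc k.
    (of_int k :: rat) powi m = of_int k ^ nat (m mod int s) + (of_int k ^ s - 1) * c"
proof -
  define j where "j = nat (m mod int s)"
  define q where "q = m div int s"
  have m: "m = int j + int s * q"
    unfolding j_def q_def using assms(2) by simp
  obtain c where c: "c \<in> Ints_loc (k ^ s)"
    "(of_int (k ^ s) :: rat) powi q - 1 = (of_int (k ^ s) - 1) * c"
    using power_int_sub_one_factor[of "k ^ s"] assms by auto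
  from c(2) have P: "(of_int k ^ s :: rat) powi q = (of_int k ^ s - 1) * c + 1"
    unfolding of_int_power diff_eq_eq .
  have "(of_int k :: rat) powi m = of_int k ^ j * (of_int k ^ s) powi q"
    unfolding m using assms(1) by (simp add: power_int_add power_int_mult)
  also have "\<dots> = of_int k ^ j + (of_int k ^ s - 1) * (of_int k ^ j * c)"
    unfolding P by (simp add: algebra_simps)
  finally show ?thesis
    unfolding j_def using c(1) Ints_loc_power_subset Ints_loc_mult Ints_loc_of_int
    by (metis of_int_power subsetD)
qed

lemma coprime_power_sub_one:
  fixes k :: int
  assumes "0 < s"
  shows "coprime (k ^ s - 1) k"
proof (rule coprimeI)
  fix d
  assume d: "d dvd k ^ s - 1" "d dvd k"
  then have "d dvd k ^ s"
    using assms dvd_power dvd_trans by blast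
  then have "d dvd k ^ s - (k ^ s - 1)"
    using d(1) by (rule dvd_diff)
  then show "is_unit d"
    by simp
qed

lemma power_sub_one_dvd_of_power_int_relation:
  fixes k u u' m :: int and s :: nat
  assumes "k \<noteq> 0" "0 < s" "w \<in> Ints_loc k"
    and "of_int u' = of_int k powi m * of_int u + w * (1 - of_int k ^ s)"
  shows "k ^ s - 1 dvd k ^ nat (m mod int s) * u - u'"
proof -
  obtain c where c: "c \<in> Ints_loc k"
    "(of_int k :: rat) powi m = of_int k ^ nat (m mod int s) + (of_int k ^ s - 1) * c"
    using power_int_mod_cong assms(1,2) by blast
  have "of_int (k ^ nat (m mod int s) * u - u') = of_int (k ^ s - 1) * (w - c * of_int u)"
    using assms(4) unfolding c(2) by (simp add: algebra_simps)
  moreover have "w - c * of_int u \<in> Ints_loc k"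
    using assms(3) c(1) by (intro Ints_loc_diff Ints_loc_mult Ints_loc_of_int)
  ultimately show ?thesis
    using dvd_of_Ints_loc[OF coprime_power_sub_one[OF assms(2)]] by blast
qed

lemma dvd_sub_imp_add_le:
  fixes M a b :: int
  assumes "M dvd a - b" "0 \<le> a" "0 \<le> b" "b < M" "a \<noteq> b"
  shows "M + b \<le> a"
proof -
  obtain c where c: "a - b = M * c"
    using assms(1) by blast
  with assms have "c \<noteq> 0" "M * c > - M"
    by auto
  then have "c \<ge> 1"
    using assms(3,4) by (smt (verit) mult_minus_right mult_le_cancel_left1)
  then show ?thesis
    using c assms(3,4) by (smt (verit) mult_le_cancel_left1)
qed

lemma add_le_power_mult_of_dvd:
  fixes k u u' M :: int
  assumes "k \<ge> 2" "0 < j" "0 < u" "0 \<le> u'" "u' < k * u" "u' < M"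
    and "M dvd k ^ j * u - u'"
  shows "M + u' \<le> k ^ j * u"
proof -
  have "k * u \<le> k ^ j * u"
    using assms(1-3) by (simp add: self_le_power mult_right_mono)
  then have "0 \<le> k ^ j * u" "k ^ j * u \<noteq> u'"
    using assms(4,5) by linarith+
  then show ?thesis
    by (rule dvd_sub_imp_add_le[OF assms(7) _ assms(4,6)])
qed

text \<open>For j > 0 both k^j u and k^(s-j) u' exceed the modulus k^s - 1, yet their product
  k^s u u' is smaller than its square.\<close>

lemma eq_of_dvd_power_mult_sub:
  fixes k u u' :: int and j s :: nat
  assumes k: "k \<ge> 2" and "j < s" and u: "0 < u" "0 < u'" "u' < k * u" "u < k * u'"
    and small: "u * u' + 2 < k ^ s" and dvd: "k ^ s - 1 dvd k ^ j * u - u'"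
  shows "u = u'"
proof (rule ccontr)
  assume "u \<noteq> u'"
  define M where "M = k ^ s - 1"
  define i where "i = s - j"
  have "u \<le> u * u'" "u' \<le> u * u'"
    using u by simp_all
  then have uM: "u < M" "u' < M"
    using small unfolding M_def by linarith+
  have "j \<noteq> 0"
  proof
    assume "j = 0"
    then have "M + u' \<le> u"
      using dvd_sub_imp_add_le[of M u u'] dvd u uM \<open>u \<noteq> u'\<close> unfolding M_def by simp
    then show False
      using uM u by linarith
  qed
  have "k ^ i * u' - u = M * u - k ^ i * (k ^ j * u - u')"
    using \<open>j < s\<close> unfolding M_def i_def by (simp add: algebra_simps power_add[symmetric])
  then have "M dvd k ^ i * u' - u"
    using dvd unfolding M_def by simp
  then have "M + u \<le> k ^ i * u'"
    using add_le_power_mult_of_dvd[OF k] \<open>j < s\<close> u uM unfolding i_def by simp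
  moreover have "M + u' \<le> k ^ j * u"
    using add_le_power_mult_of_dvd[OF k] \<open>j \<noteq> 0\<close> dvd u uM unfolding M_def by simp
  ultimately have "(M + u') * (M + u) \<le> (k ^ j * u) * (k ^ i * u')"
    using u uM by (intro mult_mono) auto
  also have "\<dots> = (M + 1) * (u * u')"
    using \<open>j < s\<close> unfolding M_def i_def by (simp add: algebra_simps power_add[symmetric])
  also have "\<dots> < (M + 1) * (M - 1)"
    using small uM u unfolding M_def by (intro mult_strict_left_mono) auto
  also have "\<dots> < M * M"
    by (simp add: algebra_simps)
  also have "\<dots> \<le> (M + u') * (M + u)"
    using u uM by (intro mult_mono) auto
  finally show False
    by simp
qed

lemma conj_BS_scaled_int_eq:
  fixes k u u' r :: int and s :: nat
  assumes k: "k \<ge> 2" and u: "0 < u" "0 < u'" "u' < k * u" "u < k * u'"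
    and small: "u * u' + 2 < k ^ s"
    and conj: "(of_int k powi r * of_int u', int s) \<in>
      conj_class (BS k) (of_int k powi r * of_int u, int s)"
  shows "u = u'"
proof -
  have kz: "k \<noteq> 0" and kq: "(of_int k :: rat) \<noteq> 0"
    using k by simp_all
  have "0 < s"
    using small mult_pos_pos[OF u(1,2)] by (cases s) auto
  obtain w m where w: "w \<in> Ints_loc k" and
    eq: "of_int k powi r * of_int u' =
      of_int k powi m * (of_int k powi r * of_int u) + w * (1 - of_int k ^ s)"
    using conj unfolding conj_class_BS[OF kz] by auto
  have "of_int u' = of_int k powi m * of_int u + (w * of_int k powi (- r)) * (1 - of_int k ^ s)"
    using eq kq by (simp add: power_int_minus field_simps)
  moreover have "w * of_int k powi (- r) \<in> Ints_loc k"
    using w k by (simp add: Ints_loc_mult Ints_loc_power_int)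
  ultimately have "k ^ s - 1 dvd k ^ nat (m mod int s) * u - u'"
    using power_sub_one_dvd_of_power_int_relation \<open>0 < s\<close> k by simp
  moreover have "nat (m mod int s) < s"
    using \<open>0 < s\<close> by (simp add: nat_less_iff)
  ultimately show ?thesis
    using eq_of_dvd_power_mult_sub k u small by blast
qed

lemma inj_on_conj_class_BS:
  fixes k a r :: int and u :: "'a \<Rightarrow> int" and s :: "'a \<Rightarrow> nat"
  assumes k: "k \<ge> 2"
    and u: "\<And>p. p \<in> A \<Longrightarrow> a \<le> u p \<and> u p < 2 * a"
    and s: "\<And>p. p \<in> A \<Longrightarrow> (2 * a) ^ 2 \<le> k ^ s p"
    and inj: "inj_on (\<lambda>p. (u p, s p)) A"
  shows "inj_on (\<lambda>p. conj_class (BS k) (of_int k powi r * of_int (u p), int (s p))) A"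
proof (rule inj_onI)
  have kz: "k \<noteq> 0"
    using k by simp
  fix p q
  assume p: "p \<in> A" and q: "q \<in> A" and
    eq: "conj_class (BS k) (of_int k powi r * of_int (u p), int (s p)) =
      conj_class (BS k) (of_int k powi r * of_int (u q), int (s q))"
  have "(of_int k powi r * of_int (u q), int (s q)) \<in>
      conj_class (BS k) (of_int k powi r * of_int (u q), int (s q))"
    unfolding conj_class_BS[OF kz]
    by (intro CollectI exI[of _ "0::rat"] exI[of _ "0::int"] conjI) simp_all
  then have conj: "(of_int k powi r * of_int (u q), int (s q)) \<in>
      conj_class (BS k) (of_int k powi r * of_int (u p), int (s p))"
    using eq by simp
  then have "s q = s p"
    unfolding conj_class_BS[OF kz] by auto
  have "u p * u q + 2 \<le> (2 * a - 1) * (2 * a - 1) + 2"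
    using u[OF p] u[OF q] by (intro add_right_mono mult_mono) auto
  also have "\<dots> < (2 * a) ^ 2"
    using u[OF p] by (simp add: power2_eq_square algebra_simps)
  also have "\<dots> \<le> k ^ s p"
    by (rule s[OF p])
  finally have small: "u p * u q + 2 < k ^ s p" .
  have "0 < u p" "0 < u q"
    using u[OF p] u[OF q] by linarith+
  moreover have "2 * u p \<le> k * u p" "2 * u q \<le> k * u q"
    using k \<open>0 < u p\<close> \<open>0 < u q\<close> by (simp_all add: mult_right_mono)
  ultimately have bounds: "0 < u p" "0 < u q" "u q < k * u p" "u p < k * u q"
    using u[OF p] u[OF q] by linarith+
  have "(of_int k powi r * of_int (u q), int (s p)) \<in>
      conj_class (BS k) (of_int k powi r * of_int (u p), int (s p))"
    using conj \<open>s q = s p\<close> by simp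
  then have "u p = u q"
    by (rule conj_BS_scaled_int_eq[OF k bounds small])
  then show "p = q"
    using inj_onD[OF inj _ p q] \<open>s q = s p\<close> by simp
qed

lemma carrier_BS_common_denominator:
  assumes "finite A" "A \<subseteq> carrier (BS k)"
  obtains E X where "\<And>p. p \<in> A \<Longrightarrow> fst p * of_int k ^ E = of_int (X p)"
proof -
  have "finite (fst ` A)" "fst ` A \<subseteq> Ints_loc k"
    using assms by (auto simp: carrier_BS)
  then obtain E where E: "\<forall>x\<in>fst ` A. x * of_int k ^ E \<in> \<int>"
    by (blast dest: Ints_loc_common_denominator)
  have "fst p * of_int k ^ E = of_int \<lfloor>fst p * of_int k ^ E\<rfloor>" if "p \<in> A" for p
  proof -
    from that E have "fst p * of_int k ^ E \<in> \<int>"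
      by blast
    then show ?thesis
      by (elim Ints_cases) simp
  qed
  then show ?thesis
    by (rule that)
qed

lemma mult_BS_common_denominator:
  assumes "k \<noteq> 0" "x * of_int k ^ E = of_int X"
  shows "(of_int k powi (N - int E) * of_int z, N) \<otimes>\<^bsub>BS k\<^esub> (x, n) =
    (of_int k powi (N - int E) * of_int (z + X), N + n)"
proof -
  have "x = of_int X / of_int k ^ E"
    using assms by (simp add: eq_divide_eq)
  then show ?thesis
    using assms(1) by (simp add: mult_BS power_int_diff field_simps)
qed

lemma int_less_power:
  fixes k :: int
  assumes "k \<ge> 2"
  shows "int n < k ^ n"
proof -
  have "int n < 2 ^ n"
    by simp
  also have "\<dots> \<le> k ^ n"
    using assms by (intro power_mono) auto
  finally show ?thesis .
qed

lemma BS_normalizing_translation: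
  fixes k :: int and A :: "(rat \<times> int) set"
  assumes k: "k \<ge> 2" and "finite A" and "A \<subseteq> carrier (BS k)"
  obtains g r u s a where "g \<in> carrier (BS k)"
    and "\<And>p. p \<in> A \<Longrightarrow> g \<otimes>\<^bsub>BS k\<^esub> p = (of_int k powi r * of_int (u p), int (s p))"
    and "\<And>p. p \<in> A \<Longrightarrow> a \<le> u p \<and> u p < 2 * a"
    and "\<And>p. p \<in> A \<Longrightarrow> (2 * a) ^ 2 \<le> k ^ s p"
    and "inj_on (\<lambda>p. (u p, s p)) A"
proof -
  have kz: "k \<noteq> 0"
    using k by simp
  obtain E X where X: "\<And>p. p \<in> A \<Longrightarrow> fst p * of_int k ^ E = of_int (X p)"
    using carrier_BS_common_denominator assms(2,3) by blast
  define B where "B = 1 + (\<Sum>p\<in>A. \<bar>X p\<bar>)"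
  define L where "L = (\<Sum>p\<in>A. \<bar>snd p\<bar>)"
  define N where "N = L + (4 * B) ^ 2"
  define u where "u p = 3 * B + X p" for p :: "rat \<times> int"
  define s where "s p = nat (N + snd p)" for p :: "rat \<times> int"
  define g where "g = ((of_int k :: rat) powi (N - E) * of_int (3 * B), N)"
  have XB: "\<bar>X p\<bar> < B" if "p \<in> A" for p
    using member_le_sum[of p A "\<lambda>p. \<bar>X p\<bar>"] that assms(2) unfolding B_def by simp
  have s: "int (s p) = N + snd p" "(4 * B) ^ 2 \<le> int (s p)" if "p \<in> A" for p
  proof -
    have "\<bar>snd p\<bar> \<le> L"
      using member_le_sum[of p A "\<lambda>p. \<bar>snd p\<bar>"] that assms(2) unfolding L_def by simp
    moreover have "0 \<le> (4 * B) ^ 2"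
      by simp
    ultimately show "int (s p) = N + snd p" "(4 * B) ^ 2 \<le> int (s p)"
      unfolding s_def N_def by arith+
  qed
  show ?thesis
  proof (rule that)
    show "g \<in> carrier (BS k)"
      unfolding g_def carrier_BS using Ints_loc_mult[OF Ints_loc_power_int[OF kz] Ints_loc_of_int]
      by blast
  next
    fix p
    assume p: "p \<in> A"
    have "g \<otimes>\<^bsub>BS k\<^esub> (fst p, snd p) = (of_int k powi (N - E) * of_int (u p), N + snd p)"
      unfolding g_def u_def by (rule mult_BS_common_denominator[OF kz X[OF p]])
    then show "g \<otimes>\<^bsub>BS k\<^esub> p = (of_int k powi (N - E) * of_int (u p), int (s p))"
      using s(1)[OF p] by simp
    show "2 * B \<le> u p \<and> u p < 2 * (2 * B)"
      using XB[OF p] unfolding u_def by (auto simp: abs_less_iff)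
    show "(2 * (2 * B)) ^ 2 \<le> k ^ s p"
      using s(2)[OF p] int_less_power[OF k, of "s p"] by simp
  next
    show "inj_on (\<lambda>p. (u p, s p)) A"
    proof (rule inj_onI)
      fix p q
      assume p: "p \<in> A" and q: "q \<in> A" and "(u p, s p) = (u q, s q)"
      then have "X p = X q" "int (s p) = int (s q)"
        unfolding u_def by simp_all
      then have "fst p * of_int k ^ E = fst q * of_int k ^ E" "snd p = snd q"
        unfolding X[OF p] X[OF q] s(1)[OF p] s(1)[OF q] by simp_all
      then show "p = q"
        using kz by (simp add: prod_eq_iff)
    qed
  qed
qed

theorem corollary5p4:
  fixes k :: int and A :: "(rat \<times> int) set"
  assumes "k \<ge> 2" and "finite A" and "A \<subseteq> carrier (BS k)"
  shows "\<exists>g \<in> carrier (BS k).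
           num_conj_classes (BS k) ((\<lambda>x. g \<otimes>\<^bsub>BS k\<^esub> x) ` A) = card A"
proof (rule BS_normalizing_translation[OF assms])
  fix g r u s a
  assume g: "g \<in> carrier (BS k)"
    and gp: "\<And>p. p \<in> A \<Longrightarrow> g \<otimes>\<^bsub>BS k\<^esub> p = (of_int k powi r * of_int (u p), int (s p))"
    and u: "\<And>p. p \<in> A \<Longrightarrow> a \<le> u p \<and> u p < 2 * a"
    and s: "\<And>p. p \<in> A \<Longrightarrow> (2 * a) ^ 2 \<le> k ^ s p"
    and inj: "inj_on (\<lambda>p. (u p, s p)) A"
  have "inj_on (\<lambda>p. conj_class (BS k) (of_int k powi r * of_int (u p), int (s p))) A"
    using inj_on_conj_class_BS[OF assms(1) u s inj] .
  then have "inj_on (\<lambda>p. conj_class (BS k) (g \<otimes>\<^bsub>BS k\<^esub> p)) A"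
    by (rule iffD2[OF inj_on_cong, rotated]) (simp add: gp)
  then have "num_conj_classes (BS k) ((\<lambda>x. g \<otimes>\<^bsub>BS k\<^esub> x) ` A) = card A"
    unfolding num_conj_classes_def image_image by (rule card_image)
  with g show ?thesis
    by blast
qed

end
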